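(* Assume the setting and the nsCRAIG recurrence described in the context, and let $k\ge1$ be such that $Q_k,B_k,H_k,\chi_k$ and $g_k$ (hence $\beta_{k+1}$) are defined, with nsCRAIG iterates $u^{(k)},p^{(k)}$. Then $Mu^{(k)}+Ap^{(k)}=0$ and $b-A^Tu^{(k)}+Cp^{(k)}=-\chi_k\,Ng_k$ (equal to $-\chi_k\beta_{k+1}Nq_{k+1}$ when $\beta_{k+1}>0$); in particular this residual is orthogonal to $q_1,\dots,q_k$ and $\|b-A^Tu^{(k)}+Cp^{(k)}\|_{N^{-1}}=\beta_{k+1}|\chi_k|$, so $\|b-A^Tu^{(k)}+Cp^{(k)}\|_{N^{-1}}/\|b\|_{N^{-1}}=\beta_{k+1}|\chi_k|/\beta_1$.
   Context: Setting: $M\in\mathbb{R}^{m\times m}$ is nonsymmetric and positive definite ($x^TMx>0$ for all $x\ne0$); $A\in\mathbb{R}^{m\times n}$ ($n\le m$) has full column rank; $C\in\mathbb{R}^{n\times n}$ is symmetric positive semidefinite; $b\in\mathbb{R}^n$ is nonzero; $N\in\mathbb{R}^{n\times n}$ is symmetric positive definite. Write $\|x\|_G=(x^TGx)^{1/2}$ for $G$ positive definite (for nonsymmetric $M$ this is the norm of its symmetric part). The generalized saddle point system is $Mu+Ap=0$, $A^Tu-Cp=b$, with unique solution $(u_*,p_* )$; $S=A^TM^{-1}A+C$. nsCRAIG recurrence (exact arithmetic): Initialization: $\beta_1=\|b\|_{N^{-1}}$, $q_1=N^{-1}b/\beta_1$, $Q_1=[q_1]$, $r_1=q_1$, $w_1=M^{-1}Aq_1$,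 $s_1=Cr_1$, $\alpha_1=(w_1^TMw_1+r_1^Ts_1)^{1/2}$, $v_1=w_1/\alpha_1$, $t_1=s_1/\alpha_1$, $\chi_1=\beta_1/\alpha_1$. For $k=1,2,\dots$: $\hat g_k=N^{-1}(A^Tv_k+t_k)$, $h_k=Q_k^TN\hat g_k\in\mathbb{R}^k$, $g_k=\hat g_k-Q_kh_k$, $\beta_{k+1}=\|g_k\|_N$; if $\beta_{k+1}=0$ the recurrence stops; otherwise $q_{k+1}=g_k/\beta_{k+1}$, $Q_{k+1}=[Q_k,q_{k+1}]$, $w_{k+1}=M^{-1}Aq_{k+1}-\beta_{k+1}v_k$, $r_{k+1}=q_{k+1}-(\beta_{k+1}/\alpha_k)r_k$, $s_{k+1}=Cr_{k+1}$, $\alpha_{k+1}=(w_{k+1}^TMw_{k+1}+r_{k+1}^Ts_{k+1})^{1/2}$, $v_{k+1}=w_{k+1}/\alpha_{k+1}$, $t_{k+1}=s_{k+1}/\alpha_{k+1}$, $\chi_{k+1}=-(\beta_{k+1}/\alpha_{k+1})\chi_k$. Matrices: $B_k\in\mathbb{R}^{k\times k}$ upper bidiagonal with $(B_k)_{ii}=\alpha_i$, $(B_k)_{i,i+1}=\beta_{i+1}$; $H_k\in\mathbb{R}^{k\times k}$ upper Hessenberg whose $j$-th column has entries $(H_k)_{ij}=(h_j)_i$ for $i\le j$, $(H_k)_{j+1,j}=\beta_{j+1}$ (if $j<k$), and zeros otherwise. The nsCRAIG iterates at step $k$ are $y_k=-B_k^{-1}H_k^{-1}(\beta_1e_1)$,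 $p^{(k)}=Q_ky_k$, $u^{(k)}=-M^{-1}Ap^{(k)}$, with $e_1$ the first unit vector of $\mathbb{R}^k$. *)

theory Defs
  imports "Jordan_Normal_Form.Gauss_Jordan_Elimination" "Jordan_Normal_Form.DL_Rank"
begin

text \<open>Matrix inverse (total: returns the zero matrix if the argument is singular;
  only ever applied to matrices that are invertible in the setting).\<close>
definition minv :: "real mat \<Rightarrow> real mat" where
  "minv X = (case mat_inverse X of Some Y \<Rightarrow> Y | None \<Rightarrow> 0\<^sub>m (dim_row X) (dim_col X))"

definition Gnorm :: "real mat \<Rightarrow> real vec \<Rightarrow> real" where
  "Gnorm G x = sqrt (x \<bullet> (G *\<^sub>v x))"

text \<open>State of nsCRAIG after step k (k >= 1):
  Qs = [q_1..q_k], Al = [alpha_1..alpha_k], Be = [beta_1..beta_k],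
  Hs = [h_1..h_(k-1)], and the current r_k, v_k, t_k, chi_k.\<close>
record cstate =
  Qs :: "real vec list"
  Al :: "real list"
  Be :: "real list"
  Hs :: "real vec list"
  rv :: "real vec"
  vv :: "real vec"
  tv :: "real vec"
  chi :: real

definition ns_init :: "real mat \<Rightarrow> real mat \<Rightarrow> real mat \<Rightarrow> real mat \<Rightarrow> real vec \<Rightarrow> cstate" where
  "ns_init M A C N b =
    (let beta1 = Gnorm (minv N) b;
         q1 = (1 / beta1) \<cdot>\<^sub>v (minv N *\<^sub>v b);
         r1 = q1;
         w1 = minv M *\<^sub>v (A *\<^sub>v q1);
         s1 = C *\<^sub>v r1;
         alpha1 = sqrt (w1 \<bullet> (M *\<^sub>v w1) + r1 \<bullet> s1)
     in \<lparr> Qs = [q1], Al = [alpha1], Be = [beta1], Hs = [], rv = r1,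
          vv = (1 / alpha1) \<cdot>\<^sub>v w1, tv = (1 / alpha1) \<cdot>\<^sub>v s1, chi = beta1 / alpha1 \<rparr>)"

definition Qmat :: "nat \<Rightarrow> cstate \<Rightarrow> real mat" where
  "Qmat n st = mat_of_cols n (Qs st)"

definition ns_ghat :: "real mat \<Rightarrow> real mat \<Rightarrow> real mat \<Rightarrow> real mat \<Rightarrow> real vec \<Rightarrow> cstate \<Rightarrow> real vec" where
  "ns_ghat M A C N b st = minv N *\<^sub>v (transpose_mat A *\<^sub>v vv st + tv st)"

definition ns_h :: "real mat \<Rightarrow> real mat \<Rightarrow> real mat \<Rightarrow> real mat \<Rightarrow> real vec \<Rightarrow> cstate \<Rightarrow> real vec" where
  "ns_h M A C N b st = transpose_mat (Qmat (dim_row N) st) *\<^sub>v (N *\<^sub>v ns_ghat M A C N b st)"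

definition ns_g :: "real mat \<Rightarrow> real mat \<Rightarrow> real mat \<Rightarrow> real mat \<Rightarrow> real vec \<Rightarrow> cstate \<Rightarrow> real vec" where
  "ns_g M A C N b st = ns_ghat M A C N b st - Qmat (dim_row N) st *\<^sub>v ns_h M A C N b st"

definition ns_beta_next :: "real mat \<Rightarrow> real mat \<Rightarrow> real mat \<Rightarrow> real mat \<Rightarrow> real vec \<Rightarrow> cstate \<Rightarrow> real" where
  "ns_beta_next M A C N b st = Gnorm N (ns_g M A C N b st)"

definition ns_step :: "real mat \<Rightarrow> real mat \<Rightarrow> real mat \<Rightarrow> real mat \<Rightarrow> real vec \<Rightarrow> cstate \<Rightarrow> cstate" where
  "ns_step M A C N b st =
    (let g = ns_g M A C N b st;
         beta' = ns_beta_next M A C N b st;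
         q' = (1 / beta') \<cdot>\<^sub>v g;
         w' = minv M *\<^sub>v (A *\<^sub>v q') - beta' \<cdot>\<^sub>v vv st;
         r' = q' - (beta' / last (Al st)) \<cdot>\<^sub>v rv st;
         s' = C *\<^sub>v r';
         alpha' = sqrt (w' \<bullet> (M *\<^sub>v w') + r' \<bullet> s')
     in \<lparr> Qs = Qs st @ [q'], Al = Al st @ [alpha'], Be = Be st @ [beta'],
          Hs = Hs st @ [ns_h M A C N b st], rv = r',
          vv = (1 / alpha') \<cdot>\<^sub>v w', tv = (1 / alpha') \<cdot>\<^sub>v s',
          chi = - (beta' / alpha') * chi st \<rparr>)"

text \<open>State after step k (meaningful for k >= 1).\<close>
definition nscraig :: "real mat \<Rightarrow> real mat \<Rightarrow> real mat \<Rightarrow> real mat \<Rightarrow> real vec \<Rightarrow> nat \<Rightarrow> cstate" where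
  "nscraig M A C N b k = (ns_step M A C N b ^^ (k - 1)) (ns_init M A C N b)"

text \<open>B_k: upper bidiagonal, (B_k)_ii = alpha_i, (B_k)_(i,i+1) = beta_(i+1) (0-based here).\<close>
definition Bmat :: "nat \<Rightarrow> cstate \<Rightarrow> real mat" where
  "Bmat k st = mat k k (\<lambda>(i, j). if i = j then Al st ! i
                                 else if j = i + 1 then Be st ! j else 0)"

text \<open>H_k: upper Hessenberg; column j is h_(j+1) on/above the diagonal, beta_(j+2) below it
  (0-based), where the list of h's is h_1..h_k.\<close>
definition Hmat :: "real mat \<Rightarrow> real mat \<Rightarrow> real mat \<Rightarrow> real mat \<Rightarrow> real vec \<Rightarrow> nat \<Rightarrow> cstate \<Rightarrow> real mat" where
  "Hmat M A C N b k st =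
    (let hs = Hs st @ [ns_h M A C N b st]
     in mat k k (\<lambda>(i, j). if i \<le> j then (hs ! j) $ i
                          else if i = j + 1 then Be st ! i else 0))"

definition ns_y :: "real mat \<Rightarrow> real mat \<Rightarrow> real mat \<Rightarrow> real mat \<Rightarrow> real vec \<Rightarrow> nat \<Rightarrow> real vec" where
  "ns_y M A C N b k =
    (let st = nscraig M A C N b k
     in - (minv (Bmat k st) *\<^sub>v (minv (Hmat M A C N b k st) *\<^sub>v (Be st ! 0 \<cdot>\<^sub>v unit_vec k 0))))"

definition ns_p :: "real mat \<Rightarrow> real mat \<Rightarrow> real mat \<Rightarrow> real mat \<Rightarrow> real vec \<Rightarrow> nat \<Rightarrow> real vec" where
  "ns_p M A C N b k = Qmat (dim_row N) (nscraig M A C N b k) *\<^sub>v ns_y M A C N b k"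

definition ns_u :: "real mat \<Rightarrow> real mat \<Rightarrow> real mat \<Rightarrow> real mat \<Rightarrow> real vec \<Rightarrow> nat \<Rightarrow> real vec" where
  "ns_u M A C N b k = - (minv M *\<^sub>v (A *\<^sub>v ns_p M A C N b k))"

end

theory Submission
  imports Defs
begin

text \<open>
  Collecting the columns of the recurrence gives the matrix relations
  \<open>M\<^sup>-\<^sup>1 A Q\<^sub>k = V\<^sub>k B\<^sub>k\<close>, \<open>C Q\<^sub>k = T\<^sub>k B\<^sub>k\<close> and
  \<open>A\<^sup>T V\<^sub>k + T\<^sub>k = N (Q\<^sub>k H\<^sub>k + g\<^sub>k e\<^sub>k\<^sup>T)\<close>, where \<open>V\<^sub>k\<close> and \<open>T\<^sub>k\<close> have
  the columns \<open>v\<^sub>i\<close> and \<open>t\<^sub>i\<close>. With \<open>\<zeta> = H\<^sub>k\<^sup>-\<^sup>1 \<beta>\<^sub>1 e\<^sub>1\<close> the iterate is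
  \<open>p = - Q\<^sub>k B\<^sub>k\<^sup>-\<^sup>1 \<zeta>\<close>, hence \<open>u = V\<^sub>k \<zeta>\<close>, \<open>C p = - T\<^sub>k \<zeta>\<close>, and the residual is
  \<open>b - N Q\<^sub>k \<beta>\<^sub>1 e\<^sub>1 - \<zeta>\<^sub>k N g\<^sub>k = - \<zeta>\<^sub>k N g\<^sub>k\<close>.

  As long as the recurrence does not stop, the \<open>q\<^sub>i\<close> are \<open>N\<close>-orthonormal and all
  \<open>\<alpha>\<^sub>i > 0\<close>. Then \<open>H\<^sub>k = B\<^sub>k\<^sup>T G\<^sub>k\<close>, where \<open>G\<^sub>k\<close> is the Gram matrix of the pairs
  \<open>(v\<^sub>i, r\<^sub>i / \<alpha>\<^sub>i)\<close> for the bilinear form \<open>(x, y) \<bullet> (x', y') = x'\<^sup>T M x + y\<^sup>T C y'\<close>; this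
  matrix is unit upper triangular. So \<open>H\<^sub>k\<close> is invertible, and forward substitution in
  \<open>B\<^sub>k\<^sup>T (G\<^sub>k \<zeta>) = \<beta>\<^sub>1 e\<^sub>1\<close> reproduces the recurrence of \<open>\<chi>\<close>, so \<open>\<zeta>\<^sub>k = \<chi>\<^sub>k\<close>. The
  orthogonality of the residual follows from \<open>g\<^sub>k \<bottom>\<^sub>N q\<^sub>1, ..., q\<^sub>k\<close>, and its
  \<open>N\<^sup>-\<^sup>1\<close>-norm is \<open>|\<chi>\<^sub>k|\<close> times the \<open>N\<close>-norm of \<open>g\<^sub>k\<close>, which is \<open>\<beta>\<^sub>k\<^sub>+\<^sub>1\<close>.
\<close>

lemma full_column_rank_mult_mat_vec_eq_0:
  fixes A :: "'a :: field mat"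
  assumes A: "A \<in> carrier_mat m n" and rank: "vec_space.rank m A = n"
    and x: "x \<in> carrier_vec n" and Ax: "A *\<^sub>v x = 0\<^sub>v m"
  shows "x = 0\<^sub>v n"
proof (rule ccontr)
  assume x_nz: "x \<noteq> 0\<^sub>v n"
  interpret vec_space "TYPE('a)" m .
  have "distinct (cols A)"
  proof (rule ccontr)
    assume "\<not> distinct (cols A)"
    then have "card (set (cols A)) < n"
      using A by (metis card_distinct card_length carrier_matD(2) cols_length nat_less_le)
    obtain S where S: "maximal S (\<lambda>T. T \<subseteq> set (cols A) \<and> lin_indpt T)"
      using maximal_exists[of "\<lambda>T. T \<subseteq> set (cols A) \<and> lin_indpt T" "card (set (cols A))" "{}"]
      by (meson List.finite_set card_mono empty_iff empty_subsetI finite_lin_indpt2 rev_finite_subset)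
    then have "card S \<le> card (set (cols A))" by (simp add: card_mono maximal_def)
    with \<open>card (set (cols A)) < n\<close> show False using rank_card_indpt[OF A S] rank by simp
  qed
  then have "lin_indpt (set (cols A))" using full_rank_lin_indpt[OF A rank] by blast
  then show False using lin_depI[OF A x x_nz Ax \<open>distinct (cols A)\<close>] by blast
qed

lemma full_column_rank_mult_mat_vec_inj:
  fixes A :: "'a :: field mat"
  assumes A: "A \<in> carrier_mat m n" and rank: "vec_space.rank m A = n"
    and x: "x \<in> carrier_vec n" and y: "y \<in> carrier_vec n" and eq: "A *\<^sub>v x = A *\<^sub>v y"
  shows "x = y"
proof -
  have "A *\<^sub>v (x - y) = 0\<^sub>v m" using eq x y A by (simp add: mult_minus_distrib_mat_vec)
  then have diff: "x - y = 0\<^sub>v n" using full_column_rank_mult_mat_vec_eq_0[OF A rank] x y by simp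
  show "x = y"
  proof (rule eq_vecI)
    fix i assume "i < dim_vec y"
    then show "x $ i = y $ i" using arg_cong[OF diff, of "\<lambda>v. v $ i"] x y by simp
  qed (use x y in simp)
qed

lemma det_nonzero_if_pos_def:
  fixes M :: "'a :: linordered_field mat"
  assumes M: "M \<in> carrier_mat m m"
    and pd: "\<forall>x \<in> carrier_vec m. x \<noteq> 0\<^sub>v m \<longrightarrow> x \<bullet> (M *\<^sub>v x) > 0"
  shows "det M \<noteq> 0"
proof
  assume "det M = 0"
  then obtain x where "x \<in> carrier_vec m" "x \<noteq> 0\<^sub>v m" "M *\<^sub>v x = 0\<^sub>v m"
    using det_0_iff_vec_prod_zero_field[OF M] by blast
  then show False using pd by auto
qed

lemma minv_mat_inverse:
  fixes X :: "real mat"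
  assumes X: "X \<in> carrier_mat k k" and det: "det X \<noteq> 0"
  shows "X * minv X = 1\<^sub>m k" "minv X * X = 1\<^sub>m k" "minv X \<in> carrier_mat k k"
proof -
  have "X \<in> Units (ring_mat TYPE(real) k ())" using det_non_zero_imp_unit[OF X det] .
  then obtain Y where Y: "mat_inverse X = Some Y" using mat_inverse(1)[OF X, of "()"] by fastforce
  then have "minv X = Y" unfolding minv_def by simp
  then show "X * minv X = 1\<^sub>m k" "minv X * X = 1\<^sub>m k" "minv X \<in> carrier_mat k k"
    using mat_inverse(2)[OF X Y] by auto
qed

lemma minv_mult_mat_vec_cancel:
  fixes X :: "real mat"
  assumes X: "X \<in> carrier_mat k k" and det: "det X \<noteq> 0" and x: "x \<in> carrier_vec k"
  shows "X *\<^sub>v (minv X *\<^sub>v x) = x" "minv X *\<^sub>v (X *\<^sub>v x) = x"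
  using minv_mat_inverse[OF X det] X x by (simp_all flip: assoc_mult_mat_vec)

lemma mult_mat_vec_in_carrier: "X \<in> carrier_mat a c \<Longrightarrow> X *\<^sub>v y \<in> carrier_vec a"
  by (metis carrier_matD(1) carrier_vec_dim_vec dim_mult_mat_vec)

lemma mult_mat_vec_zero_vec[simp]: "dim_col X = c \<Longrightarrow> X *\<^sub>v 0\<^sub>v c = 0\<^sub>v (dim_row X)"
  by (intro eq_vecI) (auto simp: scalar_prod_def)

lemma mult_mat_vec_uminus[simp]:
  fixes X :: "'a :: ring mat"
  shows "dim_vec x = dim_col X \<Longrightarrow> X *\<^sub>v (- x) = - (X *\<^sub>v x)"
  by (intro eq_vecI) auto

lemma index_mult_mat_vec_sum:
  assumes X: "X \<in> carrier_mat a c" and x: "x \<in> carrier_vec c" and i: "i < a"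
  shows "(X *\<^sub>v x) $ i = (\<Sum>j<c. X $$ (i, j) * x $ j)"
  using X x i by (simp add: scalar_prod_def lessThan_atLeast0)

lemma scalar_prod_transpose_mat_vec:
  fixes A :: "'a :: comm_ring mat"
  assumes A: "A \<in> carrier_mat m n" and x: "x \<in> carrier_vec n" and y: "y \<in> carrier_vec m"
  shows "x \<bullet> (transpose_mat A *\<^sub>v y) = (A *\<^sub>v x) \<bullet> y"
  using transpose_vec_mult_scalar[OF A x y] comm_scalar_prod[OF x mult_mat_vec_in_carrier]
    comm_scalar_prod[OF y mult_mat_vec_in_carrier] A by auto

lemma scalar_prod_sym_mat_vec_swap:
  fixes N :: "'a :: comm_ring mat"
  assumes N: "N \<in> carrier_mat n n" and sym: "transpose_mat N = N"
    and x: "x \<in> carrier_vec n" and y: "y \<in> carrier_vec n"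
  shows "x \<bullet> (N *\<^sub>v y) = y \<bullet> (N *\<^sub>v x)"
  using scalar_prod_transpose_mat_vec[OF N y x] sym comm_scalar_prod[OF mult_mat_vec_in_carrier[OF N] x]
  by simp

lemma transpose_mat_of_cols_mult_mat_vec:
  assumes "set qs \<subseteq> carrier_vec n" "y \<in> carrier_vec n"
  shows "transpose_mat (mat_of_cols n qs) *\<^sub>v y = vec (length qs) (\<lambda>i. qs ! i \<bullet> y)"
proof -
  have "\<And>i. i < length qs \<Longrightarrow> qs ! i \<in> carrier_vec n" using assms(1) nth_mem by blast
  then show ?thesis by (intro eq_vecI) (use assms in auto)
qed

lemma scalar_prod_mat_of_cols_mult_mat_vec:
  fixes qs :: "'a :: comm_ring vec list"
  assumes qs: "set qs \<subseteq> carrier_vec n" and y: "y \<in> carrier_vec n"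
    and c: "c \<in> carrier_vec (length qs)"
  shows "y \<bullet> (mat_of_cols n qs *\<^sub>v c) = (\<Sum>l<length qs. (qs ! l \<bullet> y) * c $ l)"
proof -
  have "y \<bullet> (mat_of_cols n qs *\<^sub>v c) = (transpose_mat (mat_of_cols n qs) *\<^sub>v y) \<bullet> c"
    using transpose_vec_mult_scalar[OF mat_of_cols_carrier(1) c y] by simp
  also have "\<dots> = (\<Sum>l<length qs. (qs ! l \<bullet> y) * c $ l)"
    unfolding transpose_mat_of_cols_mult_mat_vec[OF qs y] scalar_prod_def
    using c by (simp add: lessThan_atLeast0)
  finally show ?thesis .
qed

lemma index_mat_of_cols_mult_mat_vec:
  assumes p: "p < d" and c: "c \<in> carrier_vec (length ws)"
  shows "(mat_of_cols d ws *\<^sub>v c) $ p = (\<Sum>l<length ws. ws ! l $ p * c $ l)"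
  using index_mult_mat_vec_sum[OF mat_of_cols_carrier(1) c p] p by (simp add: mat_of_cols_index)

lemma mat_of_cols_upt_carrier[simp]: "mat_of_cols d (map f [0..<k]) \<in> carrier_mat d k"
  using mat_of_cols_carrier(1)[of d "map f [0..<k]"] by simp

lemma col_mult_mat[simp]: "dim_col X = dim_row Y \<Longrightarrow> j < dim_col Y \<Longrightarrow> col (X * Y) j = X *\<^sub>v col Y j"
  by (rule col_mult2) (auto intro: carrier_matI)

lemma col_add_mat[simp]:
  "dim_row X = dim_row Y \<Longrightarrow> dim_col X = dim_col Y \<Longrightarrow> j < dim_col Y \<Longrightarrow> col (X + Y) j = col X j + col Y j"
  by (rule col_add) (auto intro: carrier_matI)

locale nscraig_setting =
  fixes m n :: nat and M A C N :: "real mat" and b :: "real vec"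
  assumes M: "M \<in> carrier_mat m m" and A: "A \<in> carrier_mat m n" and C: "C \<in> carrier_mat n n"
    and N: "N \<in> carrier_mat n n" and b: "b \<in> carrier_vec n"
    and M_pd: "\<forall>x \<in> carrier_vec m. x \<noteq> 0\<^sub>v m \<longrightarrow> x \<bullet> (M *\<^sub>v x) > 0"
    and A_rank: "vec_space.rank m A = n"
    and C_psd: "\<forall>x \<in> carrier_vec n. x \<bullet> (C *\<^sub>v x) \<ge> 0"
    and b_nz: "b \<noteq> 0\<^sub>v n"
    and N_sym: "transpose_mat N = N"
    and N_pd: "\<forall>x \<in> carrier_vec n. x \<noteq> 0\<^sub>v n \<longrightarrow> x \<bullet> (N *\<^sub>v x) > 0"
begin

text \<open>Indices are 0-based: \<open>state j\<close> is the state after step \<open>j + 1\<close>, and \<open>q j\<close>, \<open>\<alpha> j\<close>,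
  \<open>\<beta> j\<close>, \<open>\<chi> j\<close>, ... are \<open>q\<^sub>j\<^sub>+\<^sub>1\<close>, \<open>\<alpha>\<^sub>j\<^sub>+\<^sub>1\<close>, \<open>\<beta>\<^sub>j\<^sub>+\<^sub>1\<close>, \<open>\<chi>\<^sub>j\<^sub>+\<^sub>1\<close>, ... of the recurrence;
  in particular \<open>\<beta> 0\<close> is \<open>\<beta>\<^sub>1\<close>. The vector \<open>w j\<close> is \<open>w\<^sub>j\<^sub>+\<^sub>1\<close>, and \<open>z j\<close> is chosen so
  that \<open>t j = C z j\<close>.\<close>

definition state :: "nat \<Rightarrow> cstate" where
  "state j = (ns_step M A C N b ^^ j) (ns_init M A C N b)"

definition "q j = Qs (state j) ! j"
definition "\<alpha> j = Al (state j) ! j"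
definition "\<beta> j = Be (state j) ! j"
definition "h j = ns_h M A C N b (state j)"
definition "ghat j = ns_ghat M A C N b (state j)"
definition "g j = ns_g M A C N b (state j)"
definition "v j = vv (state j)"
definition "r j = rv (state j)"
definition "t j = tv (state j)"
definition "\<chi> j = chi (state j)"
definition "w j = (if j = 0 then minv M *\<^sub>v (A *\<^sub>v q 0)
                   else minv M *\<^sub>v (A *\<^sub>v q j) - \<beta> j \<cdot>\<^sub>v v (j - 1))"
definition "z j = (1 / \<alpha> j) \<cdot>\<^sub>v r j"
definition "Q j = mat_of_cols n (map q [0..<Suc j])"

lemma minv_M_carrier: "minv M \<in> carrier_mat m m"
  using minv_mat_inverse(3)[OF M det_nonzero_if_pos_def[OF M M_pd]] .

lemma minv_N_carrier: "minv N \<in> carrier_mat n n"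
  using minv_mat_inverse(3)[OF N det_nonzero_if_pos_def[OF N N_pd]] .

lemma state_Suc: "state (Suc j) = ns_step M A C N b (state j)"
  unfolding state_def by simp

lemma state_lists:
  "Qs (state j) = map q [0..<Suc j] \<and> Al (state j) = map \<alpha> [0..<Suc j]
   \<and> Be (state j) = map \<beta> [0..<Suc j] \<and> Hs (state j) = map h [0..<j]"
proof (induction j)
  case 0
  show ?case by (simp add: state_def ns_init_def Let_def q_def \<alpha>_def \<beta>_def)
next
  case (Suc j)
  have snoc: "Qs (state (Suc j)) = Qs (state j) @ [last (Qs (state (Suc j)))]"
    "Al (state (Suc j)) = Al (state j) @ [last (Al (state (Suc j)))]"
    "Be (state (Suc j)) = Be (state j) @ [last (Be (state (Suc j)))]"
    "Hs (state (Suc j)) = Hs (state j) @ [h j]"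
    by (simp_all add: state_Suc ns_step_def Let_def h_def)
  have "q (Suc j) = last (Qs (state (Suc j)))"
    "\<alpha> (Suc j) = last (Al (state (Suc j)))" "\<beta> (Suc j) = last (Be (state (Suc j)))"
    unfolding q_def \<alpha>_def \<beta>_def using Suc snoc
    by (metis diff_zero last_conv_nth length_map length_upt nth_append_length snoc_eq_iff_butlast)+
  then show ?case using Suc snoc by simp
qed

lemma Qmat_state: "Qmat (dim_row N) (state j) = Q j"
  using state_lists N unfolding Qmat_def Q_def by simp

lemma last_Al_state: "last (Al (state j)) = \<alpha> j"
  using state_lists by simp

lemma recurrence_0:
  "\<beta> 0 = Gnorm (minv N) b"
  "q 0 = (1 / \<beta> 0) \<cdot>\<^sub>v (minv N *\<^sub>v b)"
  "r 0 = q 0"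
  "\<alpha> 0 = sqrt (w 0 \<bullet> (M *\<^sub>v w 0) + r 0 \<bullet> (C *\<^sub>v r 0))"
  "v 0 = (1 / \<alpha> 0) \<cdot>\<^sub>v w 0"
  "t 0 = (1 / \<alpha> 0) \<cdot>\<^sub>v (C *\<^sub>v r 0)"
  "\<chi> 0 = \<beta> 0 / \<alpha> 0"
  by (simp_all add: state_def ns_init_def Let_def q_def \<alpha>_def \<beta>_def r_def v_def t_def \<chi>_def w_def)

lemma recurrence_Suc:
  "\<beta> (Suc j) = Gnorm N (g j)"
  "q (Suc j) = (1 / \<beta> (Suc j)) \<cdot>\<^sub>v g j"
  "r (Suc j) = q (Suc j) - (\<beta> (Suc j) / \<alpha> j) \<cdot>\<^sub>v r j"
  "\<alpha> (Suc j) = sqrt (w (Suc j) \<bullet> (M *\<^sub>v w (Suc j)) + r (Suc j) \<bullet> (C *\<^sub>v r (Suc j)))"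
  "v (Suc j) = (1 / \<alpha> (Suc j)) \<cdot>\<^sub>v w (Suc j)"
  "t (Suc j) = (1 / \<alpha> (Suc j)) \<cdot>\<^sub>v (C *\<^sub>v r (Suc j))"
  "\<chi> (Suc j) = - (\<beta> (Suc j) / \<alpha> (Suc j)) * \<chi> j"
proof -
  have last: "Qs (state (Suc j)) ! Suc j = last (Qs (state (Suc j)))"
    "Al (state (Suc j)) ! Suc j = last (Al (state (Suc j)))"
    "Be (state (Suc j)) ! Suc j = last (Be (state (Suc j)))"
    using state_lists[of "Suc j"] by (simp_all add: last_conv_nth del: upt_Suc)
  note step = state_Suc ns_step_def Let_def g_def ns_beta_next_def last_Al_state
  show \<beta>: "\<beta> (Suc j) = Gnorm N (g j)"
    unfolding \<beta>_def last by (simp add: step)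
  show q: "q (Suc j) = (1 / \<beta> (Suc j)) \<cdot>\<^sub>v g j"
    unfolding q_def last \<beta> by (simp add: step)
  show r: "r (Suc j) = q (Suc j) - (\<beta> (Suc j) / \<alpha> j) \<cdot>\<^sub>v r j"
    unfolding r_def q \<beta> by (simp add: step)
  have w: "w (Suc j) = minv M *\<^sub>v (A *\<^sub>v ((1 / \<beta> (Suc j)) \<cdot>\<^sub>v g j)) - \<beta> (Suc j) \<cdot>\<^sub>v vv (state j)"
    unfolding w_def q v_def by simp
  show \<alpha>: "\<alpha> (Suc j) = sqrt (w (Suc j) \<bullet> (M *\<^sub>v w (Suc j)) + r (Suc j) \<bullet> (C *\<^sub>v r (Suc j)))"
    unfolding \<alpha>_def last w r q \<beta> by (simp add: step r_def \<alpha>_def)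
  show "v (Suc j) = (1 / \<alpha> (Suc j)) \<cdot>\<^sub>v w (Suc j)"
    "t (Suc j) = (1 / \<alpha> (Suc j)) \<cdot>\<^sub>v (C *\<^sub>v r (Suc j))"
    "\<chi> (Suc j) = - (\<beta> (Suc j) / \<alpha> (Suc j)) * \<chi> j"
    unfolding \<alpha> w r q \<beta> by (simp_all add: step r_def v_def t_def \<chi>_def \<alpha>_def)
qed

lemma nscraig_eq_state: "nscraig M A C N b (Suc j) = state j"
  unfolding nscraig_def state_def by simp

lemma ns_beta_next_state: "ns_beta_next M A C N b (state j) = \<beta> (Suc j)"
  unfolding recurrence_Suc(1) ns_beta_next_def g_def ..

lemma nth_Qs_state: "i \<le> j \<Longrightarrow> Qs (state j) ! i = q i"
  and nth_Al_state: "i \<le> j \<Longrightarrow> Al (state j) ! i = \<alpha> i"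
  and nth_Be_state: "i \<le> j \<Longrightarrow> Be (state j) ! i = \<beta> i"
  using state_lists[of j] by (simp_all del: upt_Suc)

lemma ghat_eq: "ghat j = minv N *\<^sub>v (transpose_mat A *\<^sub>v v j + t j)"
  unfolding ghat_def ns_ghat_def v_def t_def by simp

lemma h_eq: "h j = transpose_mat (Q j) *\<^sub>v (N *\<^sub>v ghat j)"
  unfolding h_def ns_h_def Qmat_state ghat_def by simp

lemma g_eq: "g j = ghat j - Q j *\<^sub>v h j"
  unfolding g_def ns_g_def Qmat_state ghat_def h_def by simp

lemma Q_carrier[simp]: "Q j \<in> carrier_mat n (Suc j)"
  unfolding Q_def by (rule mat_of_cols_upt_carrier)

lemmas carriers[simp] = M A C N b minv_M_carrier minv_N_carrier

lemma dims[simp]: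
  "dim_row M = m" "dim_col M = m" "dim_row (minv M) = m" "dim_col (minv M) = m"
  "dim_row A = m" "dim_col A = n" "dim_row C = n" "dim_col C = n"
  "dim_row N = n" "dim_col N = n" "dim_row (minv N) = n" "dim_col (minv N) = n"
  "dim_row (Q j) = n" "dim_col (Q j) = Suc j"
  using carrier_matD[OF M] carrier_matD[OF minv_M_carrier] carrier_matD[OF A] carrier_matD[OF C]
    carrier_matD[OF N] carrier_matD[OF minv_N_carrier] carrier_matD[OF Q_carrier] by auto

lemma mult_mat_vec_carriers[simp]:
  "A *\<^sub>v x \<in> carrier_vec m" "M *\<^sub>v x \<in> carrier_vec m" "minv M *\<^sub>v x \<in> carrier_vec m"
  "N *\<^sub>v x \<in> carrier_vec n" "minv N *\<^sub>v x \<in> carrier_vec n" "C *\<^sub>v x \<in> carrier_vec n"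
  "transpose_mat A *\<^sub>v y \<in> carrier_vec n" "Q j *\<^sub>v x \<in> carrier_vec n"
  by (intro carrier_vecI; simp)+

lemmas smult_simps[simp] =
  scalar_prod_smult_distrib[of _ n] scalar_prod_smult_distrib[of _ m]
  smult_scalar_prod_distrib[of _ n] smult_scalar_prod_distrib[of _ m]
  mult_mat_vec[OF N] mult_mat_vec[OF M] mult_mat_vec[OF A] mult_mat_vec[OF C]
  mult_mat_vec[OF minv_M_carrier] mult_mat_vec[OF minv_N_carrier]

lemma M_minv_cancel[simp]: "x \<in> carrier_vec m \<Longrightarrow> M *\<^sub>v (minv M *\<^sub>v x) = x"
  and minv_M_cancel[simp]: "x \<in> carrier_vec m \<Longrightarrow> minv M *\<^sub>v (M *\<^sub>v x) = x"
  using minv_mult_mat_vec_cancel[OF M det_nonzero_if_pos_def[OF M M_pd]] by auto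

lemma N_minv_cancel[simp]: "x \<in> carrier_vec n \<Longrightarrow> N *\<^sub>v (minv N *\<^sub>v x) = x"
  and minv_N_cancel[simp]: "x \<in> carrier_vec n \<Longrightarrow> minv N *\<^sub>v (N *\<^sub>v x) = x"
  using minv_mult_mat_vec_cancel[OF N det_nonzero_if_pos_def[OF N N_pd]] by auto

lemma ghat_carrier[simp]: "ghat j \<in> carrier_vec n"
  unfolding ghat_eq by simp

lemma h_carrier[simp]: "h j \<in> carrier_vec (Suc j)"
  unfolding h_eq by (intro carrier_vecI) simp

lemma g_carrier[simp]: "g j \<in> carrier_vec n"
  unfolding g_eq by simp

lemma iterate_carriers:
  "q j \<in> carrier_vec n \<and> r j \<in> carrier_vec n \<and> v j \<in> carrier_vec m \<and> t j \<in> carrier_vec n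
   \<and> w j \<in> carrier_vec m"
proof (induction j)
  case 0
  then show ?case unfolding recurrence_0(3,5,6) by (simp add: recurrence_0(2) w_def)
next
  case (Suc j)
  then show ?case unfolding recurrence_Suc(3,5,6) by (simp add: recurrence_Suc(2) w_def)
qed

lemma q_carrier[simp]: "q j \<in> carrier_vec n"
  and r_carrier[simp]: "r j \<in> carrier_vec n"
  and v_carrier[simp]: "v j \<in> carrier_vec m"
  and t_carrier[simp]: "t j \<in> carrier_vec n"
  and w_carrier[simp]: "w j \<in> carrier_vec m"
  and z_carrier[simp]: "z j \<in> carrier_vec n"
  using iterate_carriers by (auto simp: z_def)

lemma dim_iterates[simp]:
  "dim_vec (q j) = n" "dim_vec (r j) = n" "dim_vec (v j) = m" "dim_vec (t j) = n"
  "dim_vec (w j) = m" "dim_vec (z j) = n"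
  "dim_vec (ghat j) = n" "dim_vec (g j) = n" "dim_vec (h j) = Suc j"
  by (rule carrier_vecD; simp)+

lemma M_nonneg: "x \<in> carrier_vec m \<Longrightarrow> x \<bullet> (M *\<^sub>v x) \<ge> 0"
  using M_pd by (cases "x = 0\<^sub>v m") auto

lemma N_nonneg: "x \<in> carrier_vec n \<Longrightarrow> x \<bullet> (N *\<^sub>v x) \<ge> 0"
  using N_pd by (cases "x = 0\<^sub>v n") auto

lemma N_swap: "x \<in> carrier_vec n \<Longrightarrow> y \<in> carrier_vec n \<Longrightarrow> x \<bullet> (N *\<^sub>v y) = y \<bullet> (N *\<^sub>v x)"
  by (rule scalar_prod_sym_mat_vec_swap[OF N N_sym])

section \<open>\<open>N\<close>-orthonormality of the \<open>q\<close>'s\<close>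

lemma scalar_prod_N_Q:
  assumes y: "y \<in> carrier_vec n" and c: "c \<in> carrier_vec (Suc j)"
  shows "y \<bullet> (N *\<^sub>v (Q j *\<^sub>v c)) = (\<Sum>l<Suc j. (q l \<bullet> (N *\<^sub>v y)) * c $ l)"
proof -
  have "y \<bullet> (N *\<^sub>v (Q j *\<^sub>v c)) = (N *\<^sub>v y) \<bullet> (Q j *\<^sub>v c)"
    using N_swap[OF y, of "Q j *\<^sub>v c"] comm_scalar_prod[of "Q j *\<^sub>v c" n "N *\<^sub>v y"] by simp
  also have "\<dots> = (\<Sum>l<Suc j. (q l \<bullet> (N *\<^sub>v y)) * c $ l)"
    unfolding Q_def using c
    by (subst scalar_prod_mat_of_cols_mult_mat_vec) (auto simp del: upt_Suc)
  finally show ?thesis .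
qed

lemma h_index: "l \<le> j \<Longrightarrow> h j $ l = q l \<bullet> (N *\<^sub>v ghat j)"
  unfolding h_eq Q_def
  by (subst transpose_mat_of_cols_mult_mat_vec) (auto simp del: upt_Suc)

lemma scalar_prod_N_g:
  "q l \<bullet> (N *\<^sub>v g j) = q l \<bullet> (N *\<^sub>v ghat j) - (\<Sum>i<Suc j. (q i \<bullet> (N *\<^sub>v q l)) * h j $ i)"
proof -
  have "q l \<bullet> (N *\<^sub>v g j) = q l \<bullet> (N *\<^sub>v ghat j) - q l \<bullet> (N *\<^sub>v (Q j *\<^sub>v h j))"
    unfolding g_eq by (simp add: mult_minus_distrib_mat_vec[OF N] scalar_prod_minus_distrib[of _ n])
  also have "q l \<bullet> (N *\<^sub>v (Q j *\<^sub>v h j)) = (\<Sum>i<Suc j. (q i \<bullet> (N *\<^sub>v q l)) * h j $ i)"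
    by (rule scalar_prod_N_Q) auto
  finally show ?thesis .
qed

definition N_orthonormal :: "nat \<Rightarrow> bool" where
  "N_orthonormal j \<longleftrightarrow> (\<forall>a\<le>j. \<forall>c\<le>j. q a \<bullet> (N *\<^sub>v q c) = (if a = c then 1 else 0))"

lemma g_N_orthogonal:
  assumes on: "N_orthonormal j" and l: "l \<le> j"
  shows "q l \<bullet> (N *\<^sub>v g j) = 0"
proof -
  have "(\<Sum>i<Suc j. (q i \<bullet> (N *\<^sub>v q l)) * h j $ i) = (\<Sum>i<Suc j. if i = l then h j $ i else 0)"
    using on l by (intro sum.cong) (auto simp: N_orthonormal_def)
  also have "\<dots> = q l \<bullet> (N *\<^sub>v ghat j)" using l by (simp add: h_index)
  finally show ?thesis by (simp add: scalar_prod_N_g)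
qed

lemma \<alpha>_eq: "\<alpha> j = sqrt (w j \<bullet> (M *\<^sub>v w j) + r j \<bullet> (C *\<^sub>v r j))"
  and v_eq: "v j = (1 / \<alpha> j) \<cdot>\<^sub>v w j"
  and t_eq: "t j = C *\<^sub>v z j"
  by (cases j; simp add: recurrence_0 recurrence_Suc z_def)+

lemma \<alpha>_sq: "(\<alpha> j)\<^sup>2 = w j \<bullet> (M *\<^sub>v w j) + r j \<bullet> (C *\<^sub>v r j)"
  and \<alpha>_nonneg: "\<alpha> j \<ge> 0"
  using M_nonneg[of "w j"] C_psd r_carrier[of j] unfolding \<alpha>_eq by auto

lemma w_eq_0_if_\<alpha>_eq_0: "\<alpha> j = 0 \<Longrightarrow> w j = 0\<^sub>v m"
  using \<alpha>_sq[of j] M_pd M_nonneg[of "w j"] C_psd r_carrier[of j] by fastforce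

lemma w_eq: "\<alpha> j \<noteq> 0 \<Longrightarrow> w j = \<alpha> j \<cdot>\<^sub>v v j"
  unfolding v_eq by (simp add: smult_smult_assoc)

lemma M_w_0: "M *\<^sub>v w 0 = A *\<^sub>v q 0"
  unfolding w_def by simp

lemma M_w_Suc: "M *\<^sub>v w (Suc j) = A *\<^sub>v q (Suc j) - \<beta> (Suc j) \<cdot>\<^sub>v (M *\<^sub>v v j)"
  unfolding w_def by (simp add: mult_minus_distrib_mat_vec[OF M])

lemma \<beta>_0_pos: "\<beta> 0 > 0"
  and \<beta>_0_sq: "b \<bullet> (minv N *\<^sub>v b) = (\<beta> 0)\<^sup>2"
proof -
  define y where "y = minv N *\<^sub>v b"
  have y: "y \<in> carrier_vec n" and Ny: "N *\<^sub>v y = b" unfolding y_def by simp_all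
  have "y \<noteq> 0\<^sub>v n" using Ny b_nz N by auto
  then have "y \<bullet> (N *\<^sub>v y) > 0" using N_pd y by simp
  also have "y \<bullet> (N *\<^sub>v y) = b \<bullet> y" unfolding Ny by (rule comm_scalar_prod[OF y b])
  finally have pos: "b \<bullet> (minv N *\<^sub>v b) > 0" unfolding y_def .
  then show "\<beta> 0 > 0" "b \<bullet> (minv N *\<^sub>v b) = (\<beta> 0)\<^sup>2"
    unfolding recurrence_0 Gnorm_def by simp_all
qed

lemma N_q_0: "N *\<^sub>v (\<beta> 0 \<cdot>\<^sub>v q 0) = b"
  unfolding recurrence_0(2) using \<beta>_0_pos by (simp add: smult_smult_assoc)

lemma q_0_N_norm: "q 0 \<bullet> (N *\<^sub>v q 0) = 1"
proof -
  have "q 0 \<bullet> (N *\<^sub>v q 0) = (1 / \<beta> 0) * (1 / \<beta> 0) * (b \<bullet> (minv N *\<^sub>v b))"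
    using comm_scalar_prod[of b n "minv N *\<^sub>v b"] unfolding recurrence_0(2) by simp
  then show ?thesis using \<beta>_0_pos by (simp add: \<beta>_0_sq power2_eq_square)
qed

lemma Gnorm_minv_N_smult_N:
  assumes x: "x \<in> carrier_vec n"
  shows "Gnorm (minv N) (c \<cdot>\<^sub>v (N *\<^sub>v x)) = \<bar>c\<bar> * Gnorm N x"
proof -
  have "(N *\<^sub>v x) \<bullet> x = x \<bullet> (N *\<^sub>v x)" using x by (simp add: comm_scalar_prod[of _ n])
  then have "(c \<cdot>\<^sub>v (N *\<^sub>v x)) \<bullet> (minv N *\<^sub>v (c \<cdot>\<^sub>v (N *\<^sub>v x))) = c\<^sup>2 * (x \<bullet> (N *\<^sub>v x))"
    using x by (simp add: power2_eq_square)
  then show ?thesis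
    unfolding Gnorm_def by (simp add: real_sqrt_mult)
qed

text \<open>\<open>in_span_q j x\<close> stands for \<open>x \<in> span {q 0, ..., q j}\<close>, phrased as: \<open>x\<close> is
  \<open>N\<close>-orthogonal to every vector that is \<open>N\<close>-orthogonal to \<open>q 0, ..., q j\<close>.
  This consequence of membership in the span is all that is needed.\<close>

definition in_span_q :: "nat \<Rightarrow> real vec \<Rightarrow> bool" where
  "in_span_q j x \<longleftrightarrow> x \<in> carrier_vec n \<and>
     (\<forall>y \<in> carrier_vec n. (\<forall>l\<le>j. y \<bullet> (N *\<^sub>v q l) = 0) \<longrightarrow> y \<bullet> (N *\<^sub>v x) = 0)"

lemma N_orthonormal_Suc:
  assumes on: "N_orthonormal j" and pos: "\<beta> (Suc j) > 0"
  shows "N_orthonormal (Suc j)"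
proof -
  have q_Suc: "q (Suc j) = (1 / \<beta> (Suc j)) \<cdot>\<^sub>v g j" by (rule recurrence_Suc(2))
  have orth: "q l \<bullet> (N *\<^sub>v q (Suc j)) = 0" "q (Suc j) \<bullet> (N *\<^sub>v q l) = 0" if "l \<le> j" for l
    using g_N_orthogonal[OF on that] N_swap[of "q (Suc j)" "q l"] unfolding q_Suc by simp_all
  have "g j \<bullet> (N *\<^sub>v g j) = (\<beta> (Suc j))\<^sup>2"
    using recurrence_Suc(1)[of j] N_nonneg[of "g j"] unfolding Gnorm_def by simp
  then have norm: "q (Suc j) \<bullet> (N *\<^sub>v q (Suc j)) = 1"
    unfolding q_Suc using pos by (simp add: power2_eq_square)
  show ?thesis
    unfolding N_orthonormal_def
  proof (intro allI impI)
    fix a c assume "a \<le> Suc j" "c \<le> Suc j"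
    then consider "a = Suc j" "c = Suc j" | "a = Suc j" "c \<le> j" | "a \<le> j" "c = Suc j"
      | "a \<le> j" "c \<le> j" by linarith
    then show "q a \<bullet> (N *\<^sub>v q c) = (if a = c then 1 else 0)"
      by cases (use norm orth on in \<open>auto simp: N_orthonormal_def\<close>)
  qed
qed

lemma \<alpha>_0_pos: "\<alpha> 0 > 0"
proof (rule ccontr)
  assume "\<not> \<alpha> 0 > 0"
  then have "w 0 = 0\<^sub>v m" using \<alpha>_nonneg[of 0] w_eq_0_if_\<alpha>_eq_0 by simp
  then have "A *\<^sub>v q 0 = 0\<^sub>v m" using M_w_0 M by simp
  then have "q 0 = 0\<^sub>v n" using full_column_rank_mult_mat_vec_eq_0[OF A A_rank] by simp
  then show False using q_0_N_norm N by simp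
qed

lemma \<alpha>_Suc_pos:
  assumes on: "N_orthonormal (Suc j)" and x: "in_span_q j x" "M *\<^sub>v v j = A *\<^sub>v x"
  shows "\<alpha> (Suc j) > 0"
proof (rule ccontr)
  assume "\<not> \<alpha> (Suc j) > 0"
  then have "w (Suc j) = 0\<^sub>v m" using \<alpha>_nonneg[of "Suc j"] w_eq_0_if_\<alpha>_eq_0 by simp
  then have "M *\<^sub>v w (Suc j) = 0\<^sub>v m" using M by simp
  have x_carrier: "x \<in> carrier_vec n" using x(1) unfolding in_span_q_def by simp
  have "A *\<^sub>v q (Suc j) = A *\<^sub>v (\<beta> (Suc j) \<cdot>\<^sub>v x)"
  proof (rule eq_vecI)
    fix i assume "i < dim_vec (A *\<^sub>v (\<beta> (Suc j) \<cdot>\<^sub>v x))"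
    then show "(A *\<^sub>v q (Suc j)) $ i = (A *\<^sub>v (\<beta> (Suc j) \<cdot>\<^sub>v x)) $ i"
      using arg_cong[OF \<open>M *\<^sub>v w (Suc j) = 0\<^sub>v m\<close>, of "\<lambda>y. y $ i"] x(2) x_carrier
      unfolding M_w_Suc by simp
  qed simp
  then have q_eq: "q (Suc j) = \<beta> (Suc j) \<cdot>\<^sub>v x"
    using full_column_rank_mult_mat_vec_inj[OF A A_rank] x_carrier by simp
  have "\<forall>l\<le>j. q (Suc j) \<bullet> (N *\<^sub>v q l) = 0" using on unfolding N_orthonormal_def by simp
  then have "q (Suc j) \<bullet> (N *\<^sub>v x) = 0" using x(1) unfolding in_span_q_def by simp
  then have "q (Suc j) \<bullet> (N *\<^sub>v q (Suc j)) = 0"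
    using x_carrier by (subst (2) q_eq) simp
  then show False using on unfolding N_orthonormal_def by simp
qed

lemma M_v_0_eq_A_span: "in_span_q 0 ((1 / \<alpha> 0) \<cdot>\<^sub>v q 0) \<and> M *\<^sub>v v 0 = A *\<^sub>v ((1 / \<alpha> 0) \<cdot>\<^sub>v q 0)"
  unfolding in_span_q_def v_eq by (simp add: M_w_0)

lemma M_v_Suc_eq_A_span:
  assumes x: "in_span_q j x" "M *\<^sub>v v j = A *\<^sub>v x"
  defines "x' \<equiv> (1 / \<alpha> (Suc j)) \<cdot>\<^sub>v (q (Suc j) - \<beta> (Suc j) \<cdot>\<^sub>v x)"
  shows "in_span_q (Suc j) x' \<and> M *\<^sub>v v (Suc j) = A *\<^sub>v x'"
proof
  have x_carrier: "x \<in> carrier_vec n" using x(1) unfolding in_span_q_def by simp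
  show "in_span_q (Suc j) x'"
    unfolding in_span_q_def
  proof (intro conjI ballI impI)
    show "x' \<in> carrier_vec n" unfolding x'_def using x_carrier by simp
    fix y assume y: "y \<in> carrier_vec n" and orth: "\<forall>l\<le>Suc j. y \<bullet> (N *\<^sub>v q l) = 0"
    then have "y \<bullet> (N *\<^sub>v x) = 0" using x(1) unfolding in_span_q_def by simp
    then show "y \<bullet> (N *\<^sub>v x') = 0"
      unfolding x'_def using orth y x_carrier
      by (simp add: mult_minus_distrib_mat_vec[OF N] scalar_prod_minus_distrib[OF y])
  qed
  show "M *\<^sub>v v (Suc j) = A *\<^sub>v x'"
    unfolding v_eq x'_def using x_carrier
    by (simp add: M_w_Suc x(2) mult_minus_distrib_mat_vec[OF A])
qed

end

locale nscraig_nonbreakdown = nscraig_setting +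
  fixes K :: nat
  assumes \<beta>_pos: "\<And>i. 1 \<le> i \<Longrightarrow> i \<le> K \<Longrightarrow> \<beta> i > 0"
begin

lemma nonbreakdown_invariant:
  "j \<le> K \<Longrightarrow> N_orthonormal j \<and> \<alpha> j > 0 \<and> (\<exists>x. in_span_q j x \<and> M *\<^sub>v v j = A *\<^sub>v x)"
proof (induction j)
  case 0
  have "N_orthonormal 0" unfolding N_orthonormal_def using q_0_N_norm by simp
  then show ?case using \<alpha>_0_pos M_v_0_eq_A_span by blast
next
  case (Suc j)
  then obtain x where on: "N_orthonormal j" and x: "in_span_q j x" "M *\<^sub>v v j = A *\<^sub>v x" by auto
  have "N_orthonormal (Suc j)" using N_orthonormal_Suc[OF on \<beta>_pos] Suc.prems by simp
  then show ?case using \<alpha>_Suc_pos[OF _ x] M_v_Suc_eq_A_span[OF x] by blast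
qed

lemma N_orthonormal_K:
  "a \<le> K \<Longrightarrow> c \<le> K \<Longrightarrow> q a \<bullet> (N *\<^sub>v q c) = (if a = c then 1 else 0)"
  using nonbreakdown_invariant[of K] unfolding N_orthonormal_def by blast

lemma \<alpha>_pos: "i \<le> K \<Longrightarrow> \<alpha> i > 0"
  using nonbreakdown_invariant by blast

lemma g_eq_\<beta>_q: "Suc j \<le> K \<Longrightarrow> g j = \<beta> (Suc j) \<cdot>\<^sub>v q (Suc j)"
  unfolding recurrence_Suc(2)[of j] using \<beta>_pos[of "Suc j"] by (simp add: smult_smult_assoc)

end

section \<open>The Gram matrix of the \<open>v\<close>'s and \<open>z\<close>'s\<close>

context nscraig_setting
begin

definition bidiag_comb :: "nat \<Rightarrow> (nat \<Rightarrow> real vec) \<Rightarrow> nat \<Rightarrow> real vec" where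
  "bidiag_comb d f j = \<alpha> j \<cdot>\<^sub>v f j + (if j = 0 then 0\<^sub>v d else \<beta> j \<cdot>\<^sub>v f (j - 1))"

definition gram :: "nat \<Rightarrow> nat \<Rightarrow> real" where
  "gram i j = (M *\<^sub>v v i) \<bullet> v j + z i \<bullet> (C *\<^sub>v z j)"

lemma bidiag_comb_carrier[simp]:
  "(\<And>i. f i \<in> carrier_vec d) \<Longrightarrow> bidiag_comb d f j \<in> carrier_vec d"
  unfolding bidiag_comb_def by simp

lemma scalar_prod_N_ghat: "x \<in> carrier_vec n \<Longrightarrow> x \<bullet> (N *\<^sub>v ghat j) = (A *\<^sub>v x) \<bullet> v j + x \<bullet> (C *\<^sub>v z j)"
  unfolding ghat_eq t_eq
  by (simp add: scalar_prod_add_distrib[of _ n] scalar_prod_transpose_mat_vec[OF A])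

end

context nscraig_nonbreakdown
begin

lemma A_q_eq: "j \<le> K \<Longrightarrow> A *\<^sub>v q j = M *\<^sub>v bidiag_comb m v j"
proof (cases j)
  case 0
  then show ?thesis using M_w_0 w_eq[of 0] \<alpha>_pos[of 0] by (simp add: bidiag_comb_def)
next
  case (Suc i)
  assume "j \<le> K"
  then have w: "w (Suc i) = \<alpha> (Suc i) \<cdot>\<^sub>v v (Suc i)" using w_eq \<alpha>_pos Suc by fastforce
  have "A *\<^sub>v q (Suc i) = M *\<^sub>v w (Suc i) + \<beta> (Suc i) \<cdot>\<^sub>v (M *\<^sub>v v i)"
    unfolding M_w_Suc by (intro eq_vecI) simp_all
  then show ?thesis unfolding Suc w bidiag_comb_def by (simp add: mult_add_distrib_mat_vec[OF M])
qed

lemma q_eq_bidiag_comb: "j \<le> K \<Longrightarrow> q j = bidiag_comb n z j"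
proof (cases j)
  case 0
  then show ?thesis using \<alpha>_pos[of 0] by (simp add: bidiag_comb_def z_def recurrence_0(3) smult_smult_assoc)
next
  case (Suc i)
  assume "j \<le> K"
  then have "\<alpha> j \<noteq> 0" using \<alpha>_pos by fastforce
  then show ?thesis
    unfolding Suc bidiag_comb_def z_def
    by (intro eq_vecI) (auto simp: recurrence_Suc(3) field_simps)
qed

lemma scalar_prod_N_ghat_gram:
  assumes "i \<le> K"
  shows "q i \<bullet> (N *\<^sub>v ghat j) = \<alpha> i * gram i j + (if i = 0 then 0 else \<beta> i * gram (i - 1) j)"
proof -
  have "q i \<bullet> (N *\<^sub>v ghat j) = (M *\<^sub>v bidiag_comb m v i) \<bullet> v j + bidiag_comb n z i \<bullet> (C *\<^sub>v z j)"
    unfolding scalar_prod_N_ghat[OF q_carrier] A_q_eq[OF assms] by (subst q_eq_bidiag_comb[OF assms]) simp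
  then show ?thesis
    unfolding gram_def bidiag_comb_def
    by (simp add: mult_add_distrib_mat_vec[OF M] add_scalar_prod_distrib[of _ m]
        add_scalar_prod_distrib[of _ n] algebra_simps)
qed

lemma scalar_prod_N_ghat_below_diag:
  assumes "j < i" "i \<le> K"
  shows "q i \<bullet> (N *\<^sub>v ghat j) = (if i = Suc j then \<beta> (Suc j) else 0)"
proof -
  have "(\<Sum>l<Suc j. (q l \<bullet> (N *\<^sub>v q i)) * h j $ l) = 0"
    using assms by (intro sum.neutral) (auto simp: N_orthonormal_K)
  then have "q i \<bullet> (N *\<^sub>v ghat j) = q i \<bullet> (N *\<^sub>v g j)" by (simp add: scalar_prod_N_g)
  also have "\<dots> = \<beta> (Suc j) * (q i \<bullet> (N *\<^sub>v q (Suc j)))" using assms by (simp add: g_eq_\<beta>_q)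
  also have "\<dots> = (if i = Suc j then \<beta> (Suc j) else 0)" using assms by (simp add: N_orthonormal_K)
  finally show ?thesis .
qed

lemma gram_diag: "i \<le> K \<Longrightarrow> gram i i = 1"
proof -
  assume "i \<le> K"
  then have "\<alpha> i > 0" by (rule \<alpha>_pos)
  have "gram i i = (1 / \<alpha> i) * (1 / \<alpha> i) * (w i \<bullet> (M *\<^sub>v w i) + r i \<bullet> (C *\<^sub>v r i))"
    unfolding gram_def v_eq z_def
    using comm_scalar_prod[of "M *\<^sub>v w i" m "w i"] by (simp add: algebra_simps)
  also have "\<dots> = 1" unfolding \<alpha>_sq[symmetric] using \<open>\<alpha> i > 0\<close> by (simp add: power2_eq_square)
  finally show ?thesis .
qed

lemma gram_below_diag: "j < i \<Longrightarrow> i \<le> K \<Longrightarrow> gram i j = 0"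
proof (induction i)
  case 0
  then show ?case by simp
next
  case (Suc i)
  have "\<alpha> (Suc i) * gram (Suc i) j + \<beta> (Suc i) * gram i j = (if i = j then \<beta> (Suc j) else 0)"
    using scalar_prod_N_ghat_gram[OF Suc.prems(2), of j] scalar_prod_N_ghat_below_diag[OF Suc.prems]
    by simp
  moreover have "gram i j = (if i = j then 1 else 0)"
    using Suc gram_diag[of i] by (cases "i = j") simp_all
  ultimately show ?case using \<alpha>_pos[OF Suc.prems(2)] by (cases "i = j") simp_all
qed

section \<open>The factorisation \<open>H\<^sub>k = B\<^sub>k\<^sup>T G\<^sub>k\<close> and the last entry of \<open>H\<^sub>k\<^sup>-\<^sup>1 \<beta>\<^sub>1 e\<^sub>1\<close>\<close>

definition "B = Bmat (Suc K) (state K)"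
definition "H = Hmat M A C N b (Suc K) (state K)"
definition "G = mat (Suc K) (Suc K) (\<lambda>(i, j). gram i j)"

lemma B_carrier[simp]: "B \<in> carrier_mat (Suc K) (Suc K)"
  and H_carrier[simp]: "H \<in> carrier_mat (Suc K) (Suc K)"
  and G_carrier[simp]: "G \<in> carrier_mat (Suc K) (Suc K)"
  unfolding B_def Bmat_def H_def Hmat_def Let_def G_def by simp_all

lemma dims_B_H_G[simp]:
  "dim_row B = Suc K" "dim_col B = Suc K" "dim_row H = Suc K" "dim_col H = Suc K"
  "dim_row G = Suc K" "dim_col G = Suc K"
  using carrier_matD[OF B_carrier] carrier_matD[OF H_carrier] carrier_matD[OF G_carrier] by auto

lemma transpose_B_carrier[simp]: "transpose_mat B \<in> carrier_mat (Suc K) (Suc K)"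
  by simp

lemma B_index:
  "i \<le> K \<Longrightarrow> j \<le> K \<Longrightarrow> B $$ (i, j) = (if i = j then \<alpha> i else if j = i + 1 then \<beta> j else 0)"
  unfolding B_def Bmat_def by (auto simp: nth_Al_state nth_Be_state)

lemma H_index:
  assumes "i \<le> K" "j \<le> K"
  shows "H $$ (i, j) = q i \<bullet> (N *\<^sub>v ghat j)"
proof -
  have hs: "Hs (state K) @ [ns_h M A C N b (state K)] = map h [0..<Suc K]"
    using state_lists[of K] by (simp add: h_def)
  have "H $$ (i, j) = (if i \<le> j then h j $ i else if i = j + 1 then \<beta> i else 0)"
    unfolding H_def Hmat_def Let_def hs using assms by (simp add: nth_Be_state del: upt_Suc)
  then show ?thesis using h_index[of i j] scalar_prod_N_ghat_below_diag[of j i] assms by auto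
qed

lemma index_transpose_B_mult_mat_vec:
  assumes x: "x \<in> carrier_vec (Suc K)" and i: "i \<le> K"
  shows "(transpose_mat B *\<^sub>v x) $ i = \<alpha> i * x $ i + (if i = 0 then 0 else \<beta> i * x $ (i - 1))"
proof -
  have "(transpose_mat B *\<^sub>v x) $ i = (\<Sum>l<Suc K. B $$ (l, i) * x $ l)"
    using index_mult_mat_vec_sum[OF transpose_B_carrier x, of i] i by (simp del: sum.lessThan_Suc)
  also have "\<dots> = (\<Sum>l<Suc K. (if l = i then \<alpha> i * x $ i else 0)
      + (if 0 < i \<and> l = i - 1 then \<beta> i * x $ (i - 1) else 0))"
    using i by (intro sum.cong) (auto simp: B_index)
  also have "\<dots> = \<alpha> i * x $ i + (if i = 0 then 0 else \<beta> i * x $ (i - 1))"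
    using i by (simp add: sum.distrib; arith)
  finally show ?thesis .
qed

lemma H_eq_transpose_B_G: "H = transpose_mat B * G"
proof (rule eq_matI)
  fix i j assume "i < dim_row (transpose_mat B * G)" "j < dim_col (transpose_mat B * G)"
  then have i: "i \<le> K" and j: "j \<le> K" by auto
  have "(transpose_mat B * G) $$ (i, j) = (transpose_mat B *\<^sub>v col G j) $ i"
    using i j by simp
  also have "\<dots> = \<alpha> i * gram i j + (if i = 0 then 0 else \<beta> i * gram (i - 1) j)"
    using i j by (subst index_transpose_B_mult_mat_vec) (auto simp: G_def)
  also have "\<dots> = H $$ (i, j)"
    using i j by (simp add: H_index scalar_prod_N_ghat_gram)
  finally show "H $$ (i, j) = (transpose_mat B * G) $$ (i, j)" ..
qed auto

lemma det_B_pos: "det B > 0"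
proof -
  have "upper_triangular B"
    unfolding upper_triangular_def using B_index by auto
  then have "det B = (\<Prod>i = 0..<Suc K. B $$ (i, i))"
    using det_upper_triangular[OF _ B_carrier] by (simp add: prod_list_diag_prod)
  also have "\<dots> = (\<Prod>i = 0..<Suc K. \<alpha> i)"
    by (intro prod.cong) (auto simp: B_index)
  also have "\<dots> > 0" using \<alpha>_pos by (intro prod_pos) auto
  finally show ?thesis .
qed

lemma det_G: "det G = 1"
proof -
  have "upper_triangular G"
    unfolding upper_triangular_def G_def using gram_below_diag by auto
  then have "det G = (\<Prod>i = 0..<Suc K. G $$ (i, i))"
    using det_upper_triangular[OF _ G_carrier] by (simp add: prod_list_diag_prod)
  also have "\<dots> = 1"
    by (intro prod.neutral) (auto simp: G_def gram_diag)
  finally show ?thesis .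
qed

lemma det_H_nonzero: "det H \<noteq> 0"
  unfolding H_eq_transpose_B_G
  using det_mult[of "transpose_mat B" "Suc K" G] det_transpose[OF B_carrier] det_G det_B_pos by simp

lemma minv_B_carrier: "minv B \<in> carrier_mat (Suc K) (Suc K)"
  using minv_mat_inverse(3)[OF B_carrier] det_B_pos by simp

lemma B_minv_cancel: "x \<in> carrier_vec (Suc K) \<Longrightarrow> B *\<^sub>v (minv B *\<^sub>v x) = x"
  using minv_mult_mat_vec_cancel(1)[OF B_carrier] det_B_pos by simp

definition "\<zeta> = minv H *\<^sub>v (\<beta> 0 \<cdot>\<^sub>v unit_vec (Suc K) 0)"

lemma \<zeta>_carrier[simp]: "\<zeta> \<in> carrier_vec (Suc K)"
  unfolding \<zeta>_def using minv_mat_inverse(3)[OF H_carrier det_H_nonzero] by (intro carrier_vecI) simp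

lemma H_\<zeta>: "H *\<^sub>v \<zeta> = \<beta> 0 \<cdot>\<^sub>v unit_vec (Suc K) 0"
  unfolding \<zeta>_def by (rule minv_mult_mat_vec_cancel[OF H_carrier det_H_nonzero]) simp

lemma transpose_B_G_\<zeta>: "transpose_mat B *\<^sub>v (G *\<^sub>v \<zeta>) = \<beta> 0 \<cdot>\<^sub>v unit_vec (Suc K) 0"
  using H_\<zeta> unfolding H_eq_transpose_B_G
  by (simp add: assoc_mult_mat_vec[OF transpose_B_carrier G_carrier \<zeta>_carrier])

lemma index_G_\<zeta>: "i \<le> K \<Longrightarrow> (G *\<^sub>v \<zeta>) $ i = \<chi> i"
proof (induction i)
  case 0
  have "\<alpha> 0 * (G *\<^sub>v \<zeta>) $ 0 = \<beta> 0"
    using index_transpose_B_mult_mat_vec[of "G *\<^sub>v \<zeta>" 0] arg_cong[OF transpose_B_G_\<zeta>, of "\<lambda>x. x $ 0"]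
    using mult_mat_vec_in_carrier[OF G_carrier] by simp
  then show ?case using \<alpha>_pos[of 0] by (simp add: recurrence_0(7) field_simps)
next
  case (Suc i)
  have "\<alpha> (Suc i) * (G *\<^sub>v \<zeta>) $ Suc i + \<beta> (Suc i) * (G *\<^sub>v \<zeta>) $ i = 0"
    using index_transpose_B_mult_mat_vec[of "G *\<^sub>v \<zeta>" "Suc i"] Suc.prems
      arg_cong[OF transpose_B_G_\<zeta>, of "\<lambda>x. x $ Suc i"]
    using mult_mat_vec_in_carrier[OF G_carrier] by simp
  then show ?case using Suc \<alpha>_pos[OF Suc.prems] by (simp add: recurrence_Suc(7) field_simps)
qed

lemma \<zeta>_last: "\<zeta> $ K = \<chi> K"
proof -
  have "(G *\<^sub>v \<zeta>) $ K = (\<Sum>l<Suc K. (if l = K then \<zeta> $ K else 0))"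
    using index_mult_mat_vec_sum[OF G_carrier \<zeta>_carrier, of K]
    by (simp add: G_def gram_diag gram_below_diag less_Suc_eq)
  then show ?thesis using index_G_\<zeta>[of K] by simp
qed

section \<open>Matrix form of the recurrence and the residual\<close>

definition "V = mat_of_cols m (map v [0..<Suc K])"
definition "T = mat_of_cols n (map t [0..<Suc K])"
definition "Ghat = mat_of_cols n (map ghat [0..<Suc K])"
definition "E = mat_of_cols n (map (\<lambda>j. if j = K then g K else 0\<^sub>v n) [0..<Suc K])"

lemma V_carrier[simp]: "V \<in> carrier_mat m (Suc K)"
  and T_carrier[simp]: "T \<in> carrier_mat n (Suc K)"
  and Ghat_carrier[simp]: "Ghat \<in> carrier_mat n (Suc K)"
  and E_carrier[simp]: "E \<in> carrier_mat n (Suc K)"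
  unfolding V_def T_def Ghat_def E_def by (rule mat_of_cols_upt_carrier)+

lemma dims_V_T_Ghat_E[simp]:
  "dim_row V = m" "dim_col V = Suc K" "dim_row T = n" "dim_col T = Suc K"
  "dim_row Ghat = n" "dim_col Ghat = Suc K" "dim_row E = n" "dim_col E = Suc K"
  using carrier_matD[OF V_carrier] carrier_matD[OF T_carrier] carrier_matD[OF Ghat_carrier]
    carrier_matD[OF E_carrier] by auto

lemma col_Q_K[simp]: "j \<le> K \<Longrightarrow> col (Q K) j = q j"
  unfolding Q_def by (simp del: upt_Suc)

lemma mat_of_cols_mult_col_B:
  assumes f: "\<And>i. f i \<in> carrier_vec d" and j: "j \<le> K"
  shows "mat_of_cols d (map f [0..<Suc K]) *\<^sub>v col B j = bidiag_comb d f j"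
proof (rule eq_vecI)
  have "bidiag_comb d f j \<in> carrier_vec d" using f by simp
  then show dim: "dim_vec (mat_of_cols d (map f [0..<Suc K]) *\<^sub>v col B j) = dim_vec (bidiag_comb d f j)"
    by simp
  fix p assume "p < dim_vec (bidiag_comb d f j)"
  then have p: "p < d" using dim by simp
  have "(mat_of_cols d (map f [0..<Suc K]) *\<^sub>v col B j) $ p = (\<Sum>l<Suc K. f l $ p * B $$ (l, j))"
    using j p index_mat_of_cols_mult_mat_vec[of p d "col B j" "map f [0..<Suc K]"]
    by (simp add: carrier_vecI del: upt_Suc sum.lessThan_Suc)
  also have "\<dots> = (\<Sum>l<Suc K. (if l = j then \<alpha> j * f j $ p else 0)
      + (if l = j - 1 then (if j = 0 then 0 else \<beta> j * f (j - 1) $ p) else 0))"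
    using j by (intro sum.cong) (auto simp: B_index)
  also have "\<dots> = bidiag_comb d f j $ p"
    using j p f[of j] f[of "j - 1"] by (auto simp: bidiag_comb_def sum.distrib simp del: sum.lessThan_Suc)
  finally show "(mat_of_cols d (map f [0..<Suc K]) *\<^sub>v col B j) $ p = bidiag_comb d f j $ p" .
qed

lemma minv_M_A_Q_eq: "minv M * (A * Q K) = V * B"
proof (rule mat_col_eqI)
  fix j assume "j < dim_col (V * B)"
  then have j: "j \<le> K" by simp
  have "col (minv M * (A * Q K)) j = minv M *\<^sub>v (A *\<^sub>v q j)"
    using j by simp
  also have "\<dots> = col (V * B) j"
    unfolding A_q_eq[OF j] V_def using j by (simp add: mat_of_cols_mult_col_B del: upt_Suc)
  finally show "col (minv M * (A * Q K)) j = col (V * B) j" .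
qed simp_all

lemma C_Q_eq: "C * Q K = T * B"
proof (rule mat_col_eqI)
  fix j assume "j < dim_col (T * B)"
  then have j: "j \<le> K" by simp
  have "col (C * Q K) j = C *\<^sub>v bidiag_comb n z j"
    using j q_eq_bidiag_comb[OF j] by simp
  also have "\<dots> = col (T * B) j"
    unfolding T_def using j
    by (simp add: mat_of_cols_mult_col_B bidiag_comb_def t_eq mult_add_distrib_mat_vec[OF C]
        del: upt_Suc)
  finally show "col (C * Q K) j = col (T * B) j" .
qed simp_all

lemma transpose_A_V_T_eq: "transpose_mat A * V + T = N * Ghat"
proof (rule mat_col_eqI)
  fix j assume "j < dim_col (N * Ghat)"
  then have j: "j \<le> K" by simp
  have "col (transpose_mat A * V + T) j = transpose_mat A *\<^sub>v v j + t j"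
    using j by (simp add: V_def T_def del: upt_Suc)
  also have "\<dots> = col (N * Ghat) j"
    using j by (simp add: Ghat_def ghat_eq del: upt_Suc)
  finally show "col (transpose_mat A * V + T) j = col (N * Ghat) j" .
qed simp_all

lemma H_index_h:
  assumes j: "j \<le> K" and l: "l \<le> K"
  shows "H $$ (l, j) = (if l < Suc j then h j $ l else 0) + (if l = Suc j then \<beta> (Suc j) else 0)"
  using j l h_index[of l j] scalar_prod_N_ghat_below_diag[of j l] by (auto simp: H_index)

lemma Q_col_H:
  assumes j: "j \<le> K"
  shows "Q K *\<^sub>v col H j = Q j *\<^sub>v h j + (if j = K then 0\<^sub>v n else g j)"
proof (rule eq_vecI)
  fix p assume "p < dim_vec (Q j *\<^sub>v h j + (if j = K then 0\<^sub>v n else g j))"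
  then have p: "p < n" by (simp split: if_splits)
  have "(Q K *\<^sub>v col H j) $ p = (\<Sum>l<Suc K. q l $ p * col H j $ l)"
    using index_mat_of_cols_mult_mat_vec[OF p, of "col H j" "map q [0..<Suc K]"] carrier_vecI[of "col H j"]
    by (simp add: Q_def del: upt_Suc sum.lessThan_Suc)
  also have "\<dots> = (\<Sum>l<Suc K. (if l \<in> {..<Suc j} then q l $ p * h j $ l else 0)
      + (if l = Suc j then \<beta> (Suc j) * q (Suc j) $ p else 0))"
    using j by (intro sum.cong) (auto simp: H_index_h)
  also have "\<dots> = (\<Sum>l \<in> {..<Suc K} \<inter> {..<Suc j}. q l $ p * h j $ l)
      + (if Suc j \<in> {..<Suc K} then \<beta> (Suc j) * q (Suc j) $ p else 0)"
    by (simp only: sum.distrib sum.inter_restrict[OF finite_lessThan] sum.delta[OF finite_lessThan])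
  also have "{..<Suc K} \<inter> {..<Suc j} = {..<Suc j}" using j by auto
  also have "(\<Sum>l<Suc j. q l $ p * h j $ l)
      + (if Suc j \<in> {..<Suc K} then \<beta> (Suc j) * q (Suc j) $ p else 0) = (Q j *\<^sub>v h j + (if j = K then 0\<^sub>v n else g j)) $ p"
    using j p index_mat_of_cols_mult_mat_vec[OF p, of "h j" "map q [0..<Suc j]"]
    by (auto simp: Q_def g_eq_\<beta>_q simp del: upt_Suc sum.lessThan_Suc)
  finally show "(Q K *\<^sub>v col H j) $ p = (Q j *\<^sub>v h j + (if j = K then 0\<^sub>v n else g j)) $ p" .
qed simp

lemma Ghat_eq: "Ghat = Q K * H + E"
proof (rule mat_col_eqI)
  fix j assume "j < dim_col (Q K * H + E)"
  then have j: "j \<le> K" by simp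
  have "col (Q K * H + E) j = Q K *\<^sub>v col H j + (if j = K then g K else 0\<^sub>v n)"
    using j by (simp add: E_def del: upt_Suc)
  also have "\<dots> = ghat j"
    using j by (auto simp: Q_col_H g_eq)
  also have "\<dots> = col Ghat j"
    using j by (simp add: Ghat_def del: upt_Suc)
  finally show "col Ghat j = col (Q K * H + E) j" ..
qed simp_all

lemma Q_\<beta>_unit_vec: "Q K *\<^sub>v (\<beta> 0 \<cdot>\<^sub>v unit_vec (Suc K) 0) = \<beta> 0 \<cdot>\<^sub>v q 0"
proof (rule eq_vecI)
  fix p assume "p < dim_vec (\<beta> 0 \<cdot>\<^sub>v q 0)"
  then have p: "p < n" by simp
  have "(Q K *\<^sub>v (\<beta> 0 \<cdot>\<^sub>v unit_vec (Suc K) 0)) $ p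
      = (\<Sum>l<Suc K. q l $ p * (\<beta> 0 \<cdot>\<^sub>v unit_vec (Suc K) 0) $ l)"
    using index_mat_of_cols_mult_mat_vec[OF p, of _ "map q [0..<Suc K]"]
    by (simp add: Q_def del: upt_Suc sum.lessThan_Suc)
  also have "\<dots> = (\<Sum>l<Suc K. if l = 0 then \<beta> 0 * q 0 $ p else 0)"
    by (intro sum.cong) auto
  finally show "(Q K *\<^sub>v (\<beta> 0 \<cdot>\<^sub>v unit_vec (Suc K) 0)) $ p = (\<beta> 0 \<cdot>\<^sub>v q 0) $ p"
    using p by simp
qed simp

lemma E_\<zeta>: "E *\<^sub>v \<zeta> = \<chi> K \<cdot>\<^sub>v g K"
proof (rule eq_vecI)
  fix p assume "p < dim_vec (\<chi> K \<cdot>\<^sub>v g K)"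
  then have p: "p < n" by simp
  have "(E *\<^sub>v \<zeta>) $ p = (\<Sum>l<Suc K. (if l = K then g K else 0\<^sub>v n) $ p * \<zeta> $ l)"
    using index_mat_of_cols_mult_mat_vec[OF p, of \<zeta>] by (simp add: E_def del: upt_Suc sum.lessThan_Suc)
  also have "\<dots> = (\<Sum>l<Suc K. if l = K then g K $ p * \<zeta> $ K else 0)"
    using p by (intro sum.cong) auto
  finally show "(E *\<^sub>v \<zeta>) $ p = (\<chi> K \<cdot>\<^sub>v g K) $ p"
    using p by (simp add: \<zeta>_last)
qed simp

lemma residual_eq_N_g:
  defines "p \<equiv> Q K *\<^sub>v (- (minv B *\<^sub>v \<zeta>))"
  shows "b - transpose_mat A *\<^sub>v (- (minv M *\<^sub>v (A *\<^sub>v p))) + C *\<^sub>v p = - \<chi> K \<cdot>\<^sub>v (N *\<^sub>v g K)"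
proof -
  define y where "y = - (minv B *\<^sub>v \<zeta>)"
  have y: "y \<in> carrier_vec (Suc K)"
    unfolding y_def using minv_B_carrier by (intro carrier_vecI) simp
  have B_y: "B *\<^sub>v y = - \<zeta>"
    unfolding y_def using minv_B_carrier by (simp add: B_minv_cancel)
  have minv_M_A_p: "minv M *\<^sub>v (A *\<^sub>v p) = - (V *\<^sub>v \<zeta>)"
  proof -
    have "minv M *\<^sub>v (A *\<^sub>v p) = (minv M * (A * Q K)) *\<^sub>v y"
      unfolding p_def y_def[symmetric]
      using assoc_mult_mat_vec[OF A Q_carrier y] assoc_mult_mat_vec[OF minv_M_carrier _ y, of "A * Q K"]
      by (simp add: mult_carrier_mat[OF A Q_carrier])
    also have "\<dots> = - (V *\<^sub>v \<zeta>)"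
      unfolding minv_M_A_Q_eq using y by (simp add: assoc_mult_mat_vec[OF V_carrier B_carrier] B_y)
    finally show ?thesis .
  qed
  have C_p: "C *\<^sub>v p = - (T *\<^sub>v \<zeta>)"
  proof -
    have "C *\<^sub>v p = (C * Q K) *\<^sub>v y"
      unfolding p_def y_def[symmetric] using assoc_mult_mat_vec[OF C Q_carrier y] by simp
    also have "\<dots> = - (T *\<^sub>v \<zeta>)"
      unfolding C_Q_eq using y by (simp add: assoc_mult_mat_vec[OF T_carrier B_carrier] B_y)
    finally show ?thesis .
  qed
  have A_T: "transpose_mat A \<in> carrier_mat n m" by simp
  have "transpose_mat A *\<^sub>v (V *\<^sub>v \<zeta>) + T *\<^sub>v \<zeta> = (transpose_mat A * V + T) *\<^sub>v \<zeta>"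
    by (simp add: add_mult_distrib_mat_vec[OF mult_carrier_mat[OF A_T V_carrier] T_carrier \<zeta>_carrier]
        assoc_mult_mat_vec[OF A_T V_carrier \<zeta>_carrier])
  also have "\<dots> = N *\<^sub>v (Ghat *\<^sub>v \<zeta>)"
    unfolding transpose_A_V_T_eq by (rule assoc_mult_mat_vec[OF N Ghat_carrier \<zeta>_carrier])
  also have "\<dots> = N *\<^sub>v (Q K *\<^sub>v (H *\<^sub>v \<zeta>) + E *\<^sub>v \<zeta>)"
    unfolding Ghat_eq
    by (simp add: add_mult_distrib_mat_vec[OF mult_carrier_mat[OF Q_carrier H_carrier] E_carrier \<zeta>_carrier]
        assoc_mult_mat_vec[OF Q_carrier H_carrier \<zeta>_carrier])
  also have "\<dots> = b + \<chi> K \<cdot>\<^sub>v (N *\<^sub>v g K)"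
    unfolding H_\<zeta> Q_\<beta>_unit_vec E_\<zeta> by (simp add: mult_add_distrib_mat_vec[OF N] N_q_0)
  finally have AV_T: "transpose_mat A *\<^sub>v (V *\<^sub>v \<zeta>) + T *\<^sub>v \<zeta> = b + \<chi> K \<cdot>\<^sub>v (N *\<^sub>v g K)" .
  show ?thesis
  proof (rule eq_vecI)
    fix i assume "i < dim_vec (- \<chi> K \<cdot>\<^sub>v (N *\<^sub>v g K))"
    then have i: "i < n" by simp
    then show "(b - transpose_mat A *\<^sub>v (- (minv M *\<^sub>v (A *\<^sub>v p))) + C *\<^sub>v p) $ i
        = (- \<chi> K \<cdot>\<^sub>v (N *\<^sub>v g K)) $ i"
      using arg_cong[OF AV_T, of "\<lambda>x. x $ i"] unfolding minv_M_A_p C_p by simp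
  qed simp
qed

lemma ns_p_eq: "ns_p M A C N b (Suc K) = Q K *\<^sub>v (- (minv B *\<^sub>v \<zeta>))"
  unfolding ns_p_def ns_y_def Let_def nscraig_eq_state Qmat_state \<zeta>_def B_def H_def
  by (simp add: nth_Be_state)

lemma nscraig_residual:
  defines "u \<equiv> ns_u M A C N b (Suc K)" and "p \<equiv> ns_p M A C N b (Suc K)"
  defines "res \<equiv> b - transpose_mat A *\<^sub>v u + C *\<^sub>v p"
  shows "M *\<^sub>v u + A *\<^sub>v p = 0\<^sub>v m"
    and "res = - \<chi> K \<cdot>\<^sub>v (N *\<^sub>v g K)"
    and "\<beta> (Suc K) > 0 \<Longrightarrow> res = - (\<chi> K * \<beta> (Suc K)) \<cdot>\<^sub>v (N *\<^sub>v q (Suc K))"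
    and "i \<le> K \<Longrightarrow> q i \<bullet> res = 0"
    and "Gnorm (minv N) res = \<beta> (Suc K) * \<bar>\<chi> K\<bar>"
proof -
  have u: "u = - (minv M *\<^sub>v (A *\<^sub>v p))" unfolding u_def p_def ns_u_def ..
  show "M *\<^sub>v u + A *\<^sub>v p = 0\<^sub>v m"
    unfolding u by (intro eq_vecI) simp_all
  show res: "res = - \<chi> K \<cdot>\<^sub>v (N *\<^sub>v g K)"
    unfolding res_def u p_def ns_p_eq by (rule residual_eq_N_g)
  show "\<beta> (Suc K) > 0 \<Longrightarrow> res = - (\<chi> K * \<beta> (Suc K)) \<cdot>\<^sub>v (N *\<^sub>v q (Suc K))"
    unfolding res recurrence_Suc(2) by (simp add: smult_smult_assoc)
  show "i \<le> K \<Longrightarrow> q i \<bullet> res = 0"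
    using g_N_orthogonal[of K i] nonbreakdown_invariant[of K] unfolding res by simp
  show "Gnorm (minv N) res = \<beta> (Suc K) * \<bar>\<chi> K\<bar>"
    unfolding res Gnorm_minv_N_smult_N[OF g_carrier] recurrence_Suc(1) by simp
qed

end

theorem mainTheorem8:
  fixes m n k :: nat and M A C N :: "real mat" and b :: "real vec"
  assumes dims: "M \<in> carrier_mat m m" "A \<in> carrier_mat m n" "C \<in> carrier_mat n n"
      "N \<in> carrier_mat n n" "b \<in> carrier_vec n" "n \<le> m"
    and M_pd: "\<forall>x \<in> carrier_vec m. x \<noteq> 0\<^sub>v m \<longrightarrow> x \<bullet> (M *\<^sub>v x) > 0"
    and A_rank: "vec_space.rank m A = n"
    and C_sym: "transpose_mat C = C" and C_psd: "\<forall>x \<in> carrier_vec n. x \<bullet> (C *\<^sub>v x) \<ge> 0"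
    and b_nz: "b \<noteq> 0\<^sub>v n"
    and N_sym: "transpose_mat N = N" and N_pd: "\<forall>x \<in> carrier_vec n. x \<noteq> 0\<^sub>v n \<longrightarrow> x \<bullet> (N *\<^sub>v x) > 0"
    and k_pos: "1 \<le> k"
    and not_stopped: "\<forall>j \<in> {1..<k}. ns_beta_next M A C N b (nscraig M A C N b j) > 0"
  shows
    "let st = nscraig M A C N b k;
         u = ns_u M A C N b k; p = ns_p M A C N b k;
         res = b - transpose_mat A *\<^sub>v u + C *\<^sub>v p;
         beta_next = ns_beta_next M A C N b st
     in M *\<^sub>v u + A *\<^sub>v p = 0\<^sub>v m
      \<and> res = - (chi st) \<cdot>\<^sub>v (N *\<^sub>v ns_g M A C N b st)
      \<and> (beta_next > 0 \<longrightarrow>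
           res = - (chi st * beta_next) \<cdot>\<^sub>v (N *\<^sub>v (Qs (nscraig M A C N b (k + 1)) ! k)))
      \<and> (\<forall>i < k. Qs st ! i \<bullet> res = 0)
      \<and> Gnorm (minv N) res = beta_next * \<bar>chi st\<bar>
      \<and> Gnorm (minv N) res / Gnorm (minv N) b = beta_next * \<bar>chi st\<bar> / Be st ! 0"
proof -
  interpret nscraig_setting m n M A C N b
    using dims M_pd A_rank C_psd b_nz N_sym N_pd by unfold_locales auto
  obtain K where k: "k = Suc K" using k_pos by (cases k) auto
  interpret nscraig_nonbreakdown m n M A C N b K
  proof
    fix i assume "1 \<le> i" "i \<le> K"
    then obtain j where "i = Suc j" "Suc j \<in> {1..<k}" using k by (cases i) auto
    then show "\<beta> i > 0" using not_stopped nscraig_eq_state ns_beta_next_state by metis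
  qed
  have "Gnorm (minv N) b = Be (state K) ! 0" using recurrence_0(1) nth_Be_state[of 0 K] by simp
  then show ?thesis
    using nscraig_residual nth_Qs_state[of _ K] nth_Qs_state[of "Suc K" "Suc K"]
    unfolding Let_def k nscraig_eq_state ns_beta_next_state Suc_eq_plus1[symmetric]
    by (auto simp: g_def \<chi>_def less_Suc_eq_le)
qed

end
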